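(* Let $\ln f(y\mid\theta)=-\tfrac12(y-\theta)^2$. Fix $M\ge1$, reals $y_\mu,a_\mu$ and $s_\mu>0$ ($\mu=1,\dots,M$), and let $\gamma_0=-1/\max_\mu s_\mu$. For $\gamma>\gamma_0$ let $$\theta^*_\mu(\gamma)=\mathop{\mathrm{argmax}}_{\theta}\Big\{\gamma\ln f(y_\mu\mid\theta)-\frac{(\theta-a_\mu)^2}{2s_\mu}\Big\},\qquad g_\mu(\gamma)=y_\mu-\theta^*_\mu(\gamma),$$ $$\mathcal T(\gamma)=\frac1M\sum_{\mu=1}^M\Big[\gamma\ln f(y_\mu\mid\theta^*_\mu(\gamma))-\frac{(\theta^*_\mu(\gamma)-a_\mu)^2}{2s_\mu}\Big].$$ Then (i) $\mathcal T'(\gamma)=\frac1M\sum_\mu\ln f(y_\mu\mid\theta^*_\mu(\gamma))$ and for every integer $k\ge2$ and $\gamma>\gamma_0$, $$\mathcal T^{(k)}(\gamma)=\frac{k!}{2M}(-1)^k\sum_{\mu=1}^M g_\mu(\gamma)^2\Big(\frac{s_\mu}{1+\gamma s_\mu}\Big)^{k-1}.$$ (ii) Assume $y_\mu\neq a_\mu$ for some $\mu$, and put $g_\mu=g_\mu(1)$, $r_\mu=s_\mu/(1+s_\mu)$. Then the limit $L=\lim_{n\to\infty}\frac{\sum_\mu g_\mu^2r_\mu^{\,n}}{\sum_\mu g_\mu^2 r_\mu^{\,n-1}}$ exists, and the power series $\sum_{k\ge0}\frac{1}{k!}\mathcal T^{(k)}(1)\,\eta^k$ (the Taylor expansion of $\mathcal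 T$ about $\gamma=1$ in the increment $\eta$) converges when $|\eta| L<1$ and diverges when $|\eta|L>1$. In particular, if $s_\mu=s$ for all $\mu$, it converges iff... more precisely converges for $|\eta|\,\frac{s}{1+s}<1$ and diverges for $|\eta|\,\frac{s}{1+s}>1$.
   Context: This is the GAMP (generalized approximate message passing) description for the Gaussian likelihood: $a_\mu$ plays the role of the cavity estimate $\widehat\theta^{\setminus\mu}_\mu$ of the model parameter, $s_\mu$ the rescaled variance ${s_\theta}_\mu$, and $g_\mu$ the rescaled quantity $(\check g_{\mathrm{out}})_\mu$; $\mathcal T''(1)$ is the GAMP expression of the functional variance. The series expansion of $\mathcal T$ is the one underlying the widely applicable information criterion (WAIC). When the predictor entries are i.i.d. with mean 0 and variance 1, all $s_\mu$ coincide with a common value $s$. *)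

theory Defs
  imports "HOL-Analysis.Analysis"
begin

definition lnf :: "real \<Rightarrow> real \<Rightarrow> real" where
  "lnf y \<theta> = - (1/2) * (y - \<theta>)^2"

definition obj :: "real \<Rightarrow> real \<Rightarrow> real \<Rightarrow> real \<Rightarrow> real \<Rightarrow> real" where
  "obj y a s \<gamma> \<theta> = \<gamma> * lnf y \<theta> - (\<theta> - a)^2 / (2 * s)"

definition theta_star :: "real \<Rightarrow> real \<Rightarrow> real \<Rightarrow> real \<Rightarrow> real" where
  "theta_star y a s \<gamma> = (ARG_MAX (obj y a s \<gamma>) \<theta>. True)"

definition gfun :: "real \<Rightarrow> real \<Rightarrow> real \<Rightarrow> real \<Rightarrow> real" where
  "gfun y a s \<gamma> = y - theta_star y a s \<gamma>"

definition Tfun :: "nat \<Rightarrow> (nat \<Rightarrow> real) \<Rightarrow> (nat \<Rightarrow> real) \<Rightarrow> (nat \<Rightarrow> real) \<Rightarrow> real \<Rightarrow> real" where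
  "Tfun M y a s \<gamma> = (1 / real M) *
     (\<Sum>\<mu>\<in>{1..M}. obj (y \<mu>) (a \<mu>) (s \<mu>) \<gamma> (theta_star (y \<mu>) (a \<mu>) (s \<mu>) \<gamma>))"

definition gamma0 :: "nat \<Rightarrow> (nat \<Rightarrow> real) \<Rightarrow> real" where
  "gamma0 M s = - 1 / Max (s ` {1..M})"

end

(* For 1 + \<gamma> s > 0 the objective is a concave quadratic in \<theta>, so \<theta>* and g are explicit and
   T(\<gamma>) = -(1/2M) \<Sum>\<^sub>\<mu> (y\<^sub>\<mu> - a\<^sub>\<mu>)\<^sup>2 \<gamma> / (1 + \<gamma> s\<^sub>\<mu>); differentiating the rational functions
   \<gamma> / (1 + \<gamma> s\<^sub>\<mu>) gives (i). At \<gamma> = 1 the Taylor series, shifted by one term, is a finite combination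
   of geometric series in -\<eta> r\<^sub>\<mu>. It converges iff |\<eta>| r\<^sub>\<mu> < 1 for every \<mu> with g\<^sub>\<mu> \<noteq> 0, and the largest
   such r\<^sub>\<mu> is the limit L of the ratio of consecutive power sums. *)

theory Submission
  imports Defs
begin

lemma arg_max_concave_quadratic:
  fixes f :: "real \<Rightarrow> real"
  assumes "k > 0" and f: "\<And>\<theta>. f \<theta> = c - k * (\<theta> - \<theta>\<^sub>0)\<^sup>2"
  shows "(ARG_MAX f \<theta>. True) = \<theta>\<^sub>0"
proof -
  have "f (ARG_MAX f \<theta>. True) = f \<theta>\<^sub>0"
    by (rule arg_max_equality) (use \<open>k > 0\<close> in \<open>simp_all add: f\<close>)
  then show ?thesis using \<open>k > 0\<close> by (simp add: f)
qed

lemma has_real_derivative_inverse_power: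
  fixes s :: real
  assumes "1 + \<gamma> * s \<noteq> 0"
  shows "((\<lambda>g. inverse (1 + g * s) ^ n) has_real_derivative
           - real n * s * inverse (1 + \<gamma> * s) ^ Suc n) (at \<gamma>)"
proof -
  have "((\<lambda>g. inverse (1 + g * s)) has_real_derivative - (s * inverse (1 + \<gamma> * s) ^ 2)) (at \<gamma>)"
    using assms by (auto intro!: derivative_eq_intros simp: power2_eq_square)
  from DERIV_power[OF this, of n] show ?thesis
    by (rule DERIV_cong) (cases n, simp_all add: power2_eq_square algebra_simps)
qed

lemma higher_deriv_eq_on_open:
  fixes F :: "'a::real_normed_field \<Rightarrow> 'a" and f :: "nat \<Rightarrow> 'a \<Rightarrow> 'a"
  assumes "open U" and F: "\<And>x. x \<in> U \<Longrightarrow> F x = f 0 x"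
    and f: "\<And>j x. x \<in> U \<Longrightarrow> (f j has_field_derivative f (Suc j) x) (at x)"
    and "x \<in> U"
  shows "((deriv ^^ j) F has_field_derivative f (Suc j) x) (at x)"
proof -
  have "\<forall>x\<in>U. (deriv ^^ j) F x = f j x" for j
  proof (induction j)
    case (Suc j)
    have "((deriv ^^ j) F has_field_derivative f (Suc j) x) (at x)" if "x \<in> U" for x
      using has_field_derivative_transform_within_open[OF f[OF that] \<open>open U\<close> that] Suc by simp
    then show ?case by (simp add: DERIV_imp_deriv)
  qed (simp add: F)
  then show ?thesis
    using has_field_derivative_transform_within_open[OF f[OF \<open>x \<in> U\<close>] \<open>open U\<close> \<open>x \<in> U\<close>] by simp
qed

definition dominant_rate :: "'a set \<Rightarrow> ('a \<Rightarrow> real) \<Rightarrow> ('a \<Rightarrow> real) \<Rightarrow> real" where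
  "dominant_rate I w r = Max (r ` {i\<in>I. w i \<noteq> 0})"

lemma dominant_rate_ge:
  "finite I \<Longrightarrow> i \<in> I \<Longrightarrow> w i \<noteq> 0 \<Longrightarrow> r i \<le> dominant_rate I w r"
  unfolding dominant_rate_def by (rule Max_ge) auto

lemma dominant_rate_attained:
  assumes "finite I" and "\<exists>i\<in>I. w i \<noteq> 0"
  obtains i where "i \<in> I" "w i \<noteq> 0" "r i = dominant_rate I w r"
proof -
  have "dominant_rate I w r \<in> r ` {i\<in>I. w i \<noteq> 0}"
    unfolding dominant_rate_def using assms by (intro Max_in) auto
  then show ?thesis using that by auto
qed

lemma dominant_rate_const:
  assumes "\<forall>i\<in>I. r i = c" and "\<exists>i\<in>I. w i \<noteq> 0"
  shows "dominant_rate I w r = c"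
proof -
  have "r ` {i\<in>I. w i \<noteq> 0} = {c}" using assms by auto
  then show ?thesis by (simp add: dominant_rate_def)
qed

lemma normalized_power_tendsto:
  fixes w r :: "'a \<Rightarrow> real"
  assumes "finite I" and "i \<in> I" and "\<forall>i\<in>I. r i \<ge> 0" and "dominant_rate I w r > 0"
  shows "(\<lambda>m. w i * (r i / dominant_rate I w r) ^ m)
           \<longlonglongrightarrow> (if r i = dominant_rate I w r then w i else 0)"
proof (cases "w i = 0 \<or> r i = dominant_rate I w r")
  case False
  then have "r i < dominant_rate I w r"
    using dominant_rate_ge[OF assms(1,2)] by (simp add: order.not_eq_order_implies_strict)
  then have "(\<lambda>m. (r i / dominant_rate I w r) ^ m) \<longlonglongrightarrow> 0"
    using assms by (intro LIMSEQ_power_zero) auto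
  then show ?thesis using False tendsto_mult_right_zero by auto
qed (use assms(4) in auto)

(* After division by R\<^sup>n only the terms with r i = R survive in numerator and denominator. *)
lemma power_sum_ratio_tendsto:
  fixes w r :: "'a \<Rightarrow> real"
  assumes "finite I" and w: "\<forall>i\<in>I. w i \<ge> 0" and r: "\<forall>i\<in>I. r i > 0" and "\<exists>i\<in>I. w i \<noteq> 0"
  shows "(\<lambda>n. (\<Sum>i\<in>I. w i * r i ^ n) / (\<Sum>i\<in>I. w i * r i ^ (n - 1))) \<longlonglongrightarrow> dominant_rate I w r"
proof -
  define R where "R = dominant_rate I w r"
  define w\<^sub>R where "w\<^sub>R i = (if r i = R then w i else 0)" for i
  obtain i\<^sub>0 where i\<^sub>0: "i\<^sub>0 \<in> I" "w i\<^sub>0 \<noteq> 0" "r i\<^sub>0 = R"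
    using dominant_rate_attained[OF \<open>finite I\<close> \<open>\<exists>i\<in>I. w i \<noteq> 0\<close>] unfolding R_def by metis
  have "R > 0" using i\<^sub>0 r by auto
  have "w\<^sub>R i\<^sub>0 \<le> (\<Sum>i\<in>I. w\<^sub>R i)"
    using \<open>finite I\<close> i\<^sub>0 w by (intro member_le_sum) (auto simp: w\<^sub>R_def)
  moreover have "w\<^sub>R i\<^sub>0 > 0" using i\<^sub>0 w by (auto simp: w\<^sub>R_def)
  ultimately have "(\<Sum>i\<in>I. w\<^sub>R i) \<noteq> 0" by linarith
  then have "(\<lambda>m. (\<Sum>i\<in>I. r i * (w i * (r i / R) ^ m)) / (\<Sum>i\<in>I. w i * (r i / R) ^ m))
      \<longlonglongrightarrow> (\<Sum>i\<in>I. r i * w\<^sub>R i) / (\<Sum>i\<in>I. w\<^sub>R i)"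
    using normalized_power_tendsto[OF \<open>finite I\<close>] r \<open>R > 0\<close> unfolding R_def w\<^sub>R_def
    by (intro tendsto_divide tendsto_sum tendsto_mult_left) (auto simp: less_imp_le)
  moreover have "(\<Sum>i\<in>I. r i * w\<^sub>R i) = R * (\<Sum>i\<in>I. w\<^sub>R i)"
    unfolding sum_distrib_left by (rule sum.cong) (auto simp: w\<^sub>R_def)
  moreover have "(\<Sum>i\<in>I. w i * r i ^ Suc m) / (\<Sum>i\<in>I. w i * r i ^ (Suc m - 1))
      = (\<Sum>i\<in>I. r i * (w i * (r i / R) ^ m)) / (\<Sum>i\<in>I. w i * (r i / R) ^ m)" for m
  proof -
    have "(\<Sum>i\<in>I. w i * r i ^ Suc m) = R ^ m * (\<Sum>i\<in>I. r i * (w i * (r i / R) ^ m))"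
      and "(\<Sum>i\<in>I. w i * r i ^ (Suc m - 1)) = R ^ m * (\<Sum>i\<in>I. w i * (r i / R) ^ m)"
      unfolding sum_distrib_left using \<open>R > 0\<close> by (auto intro!: sum.cong simp: power_divide)
    then show ?thesis using \<open>R > 0\<close> by simp
  qed
  ultimately show ?thesis
    using \<open>(\<Sum>i\<in>I. w\<^sub>R i) \<noteq> 0\<close> unfolding R_def
    by (subst filterlim_sequentially_Suc[symmetric]) simp
qed

lemma summable_power_sum:
  fixes w r :: "'a \<Rightarrow> real"
  assumes "finite I" and "\<forall>i\<in>I. r i \<ge> 0" and "\<bar>x\<bar> * dominant_rate I w r < 1"
  shows "summable (\<lambda>k. \<Sum>i\<in>I. w i * (x * r i) ^ k)"
proof (rule summable_sum)
  fix i assume "i \<in> I"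
  show "summable (\<lambda>k. w i * (x * r i) ^ k)"
  proof (cases "w i = 0")
    case False
    then have "\<bar>x\<bar> * r i \<le> \<bar>x\<bar> * dominant_rate I w r"
      using dominant_rate_ge[OF \<open>finite I\<close> \<open>i \<in> I\<close>] by (simp add: mult_left_mono)
    then have "norm (x * r i) < 1" using assms \<open>i \<in> I\<close> by (simp add: abs_mult)
    then show ?thesis by (intro summable_mult summable_geometric)
  qed simp
qed

lemma not_summable_power_sum:
  fixes w r :: "'a \<Rightarrow> real"
  assumes "finite I" and w: "\<forall>i\<in>I. w i \<ge> 0" and r: "\<forall>i\<in>I. r i \<ge> 0" and "\<exists>i\<in>I. w i \<noteq> 0"
    and x: "\<bar>x\<bar> * dominant_rate I w r > 1"
  shows "\<not> summable (\<lambda>k. \<Sum>i\<in>I. w i * (x * r i) ^ k)"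
proof
  assume "summable (\<lambda>k. \<Sum>i\<in>I. w i * (x * r i) ^ k)"
  then have "(\<lambda>k. \<bar>\<Sum>i\<in>I. w i * (x * r i) ^ k\<bar>) \<longlonglongrightarrow> 0"
    by (intro tendsto_rabs_zero summable_LIMSEQ_zero)
  obtain i\<^sub>0 where i\<^sub>0: "i\<^sub>0 \<in> I" "w i\<^sub>0 \<noteq> 0" "r i\<^sub>0 = dominant_rate I w r"
    using dominant_rate_attained[OF \<open>finite I\<close> \<open>\<exists>i\<in>I. w i \<noteq> 0\<close>] by metis
  have "w i\<^sub>0 \<le> \<bar>\<Sum>i\<in>I. w i * (x * r i) ^ k\<bar>" for k
  proof -
    have "1 \<le> (\<bar>x\<bar> * r i\<^sub>0) ^ k" using x i\<^sub>0 by (simp add: one_le_power)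
    then have "w i\<^sub>0 \<le> w i\<^sub>0 * (\<bar>x\<bar> * r i\<^sub>0) ^ k"
      using i\<^sub>0 w mult_left_mono[of 1 _ "w i\<^sub>0"] by simp
    also have "\<dots> \<le> (\<Sum>i\<in>I. w i * (\<bar>x\<bar> * r i) ^ k)"
      using \<open>finite I\<close> i\<^sub>0 w r by (intro member_le_sum) auto
    also have "\<dots> = \<bar>\<Sum>i\<in>I. w i * (x * r i) ^ k\<bar>"
    proof -
      have "(\<Sum>i\<in>I. w i * (c * r i) ^ k) = c ^ k * (\<Sum>i\<in>I. w i * r i ^ k)" for c
        by (simp add: power_mult_distrib sum_distrib_left mult_ac)
      moreover have "(\<Sum>i\<in>I. w i * r i ^ k) \<ge> 0" using w r by (intro sum_nonneg) simp
      ultimately show ?thesis by (simp add: abs_mult power_abs)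
    qed
    finally show ?thesis .
  qed
  then have "w i\<^sub>0 \<le> 0"
    using LIMSEQ_le_const[OF \<open>(\<lambda>k. _) \<longlonglongrightarrow> 0\<close>] by blast
  then show False using i\<^sub>0 w by force
qed

lemma obj_completed_square:
  fixes s \<gamma> :: real
  assumes "s \<noteq> 0" and "1 + \<gamma> * s \<noteq> 0"
  shows "obj y a s \<gamma> \<theta> = - ((y - a)\<^sup>2 / 2) * (\<gamma> / (1 + \<gamma> * s))
           - (1 + \<gamma> * s) / (2 * s) * (\<theta> - (\<gamma> * s * y + a) / (1 + \<gamma> * s))\<^sup>2"
proof -
  define q where "q = 1 + \<gamma> * s"
  define \<theta>\<^sub>0 where "\<theta>\<^sub>0 = (\<gamma> * s * y + a) / q"
  have "\<gamma> * s * y + a = q * \<theta>\<^sub>0"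
    using assms by (simp add: q_def \<theta>\<^sub>0_def)
  then have "\<gamma> * s * (y - \<theta>)\<^sup>2 + (\<theta> - a)\<^sup>2 = \<gamma> * s * (y - a)\<^sup>2 / q + q * (\<theta> - \<theta>\<^sub>0)\<^sup>2"
    using assms by (simp add: q_def field_simps) algebra
  then show ?thesis
    using assms unfolding obj_def lnf_def q_def[symmetric] \<theta>\<^sub>0_def[symmetric]
    by (simp add: field_simps) algebra
qed

lemma theta_star_eq:
  assumes "s > 0" and "1 + \<gamma> * s > 0"
  shows "theta_star y a s \<gamma> = (\<gamma> * s * y + a) / (1 + \<gamma> * s)"
  unfolding theta_star_def using assms
  by (intro arg_max_concave_quadratic[where k = "(1 + \<gamma> * s) / (2 * s)"])
     (simp_all add: obj_completed_square)

lemma gfun_eq: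
  assumes "s > 0" and "1 + \<gamma> * s > 0"
  shows "gfun y a s \<gamma> = (y - a) / (1 + \<gamma> * s)"
  using assms by (simp add: gfun_def theta_star_eq field_simps)

lemma obj_theta_star:
  assumes "s > 0" and "1 + \<gamma> * s > 0"
  shows "obj y a s \<gamma> (theta_star y a s \<gamma>) = - ((y - a)\<^sup>2 / 2) * (\<gamma> / (1 + \<gamma> * s))"
  using assms by (simp add: obj_completed_square theta_star_eq)

lemma lnf_theta_star: "lnf y (theta_star y a s \<gamma>) = - (gfun y a s \<gamma>)\<^sup>2 / 2"
  by (simp add: lnf_def gfun_def)

(* The k-th derivative of \<gamma> \<mapsto> \<gamma> / (1 + \<gamma> s). *)
definition frac_deriv :: "nat \<Rightarrow> real \<Rightarrow> real \<Rightarrow> real" where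
  "frac_deriv k s \<gamma> =
     (if k = 0 then \<gamma> / (1 + \<gamma> * s) else (-1) ^ (k + 1) * fact k * s ^ (k - 1) * inverse (1 + \<gamma> * s) ^ (k + 1))"

lemma has_real_derivative_frac_deriv:
  assumes "1 + \<gamma> * s \<noteq> 0"
  shows "(frac_deriv k s has_real_derivative frac_deriv (Suc k) s \<gamma>) (at \<gamma>)"
proof (cases k)
  case 0
  show ?thesis unfolding 0 frac_deriv_def using assms
    by (auto intro!: derivative_eq_intros simp: field_simps power2_eq_square)
next
  case (Suc j)
  have "((\<lambda>g. ((-1) ^ (k + 1) * fact k * s ^ (k - 1)) * inverse (1 + g * s) ^ (k + 1))
          has_real_derivative ((-1) ^ (k + 1) * fact k * s ^ (k - 1)) *
            (- real (k + 1) * s * inverse (1 + \<gamma> * s) ^ Suc (k + 1))) (at \<gamma>)"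
    by (intro DERIV_cmult has_real_derivative_inverse_power assms)
  moreover have "((-1) ^ (k + 1) * fact k * s ^ (k - 1)) * (- real (k + 1) * s * inverse (1 + \<gamma> * s) ^ Suc (k + 1))
      = frac_deriv (Suc k) s \<gamma>"
    by (simp add: frac_deriv_def Suc algebra_simps)
  moreover have "frac_deriv k s = (\<lambda>g. ((-1) ^ (k + 1) * fact k * s ^ (k - 1)) * inverse (1 + g * s) ^ (k + 1))"
    using Suc by (simp add: frac_deriv_def fun_eq_iff)
  ultimately show ?thesis by simp
qed

lemma frac_deriv_Suc:
  assumes "1 + \<gamma> * s \<noteq> 0"
  shows "frac_deriv (Suc k) s \<gamma> = (-1) ^ k * fact (Suc k) * (s / (1 + \<gamma> * s)) ^ k / (1 + \<gamma> * s)\<^sup>2"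
  using assms by (simp add: frac_deriv_def power_divide power2_eq_square field_simps)

lemma one_plus_gamma_s_pos:
  assumes spos: "\<forall>\<mu>\<in>{1..M}. s \<mu> > 0" and "\<gamma> > gamma0 M s" and \<mu>: "\<mu> \<in> {1..M}"
  shows "1 + \<gamma> * s \<mu> > 0"
proof -
  define m where "m = Max (s ` {1..M})"
  have "s \<mu> \<le> m" using \<mu> by (simp add: m_def)
  moreover have "s \<mu> > 0" using spos \<mu> by simp
  moreover have "\<gamma> * m > -1"
    using \<open>\<gamma> > gamma0 M s\<close> \<open>s \<mu> \<le> m\<close> \<open>s \<mu> > 0\<close> by (simp add: gamma0_def m_def field_simps)
  ultimately show ?thesis
  proof (cases "\<gamma> \<ge> 0")
    case False
    then have "\<gamma> * m \<le> \<gamma> * s \<mu>" using \<open>s \<mu> \<le> m\<close> by (simp add: mult_left_mono_neg)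
    then show ?thesis using \<open>\<gamma> * m > -1\<close> by linarith
  qed (auto intro: add_pos_nonneg)
qed

lemma gamma0_neg:
  assumes "M \<ge> 1" and "\<forall>\<mu>\<in>{1..M}. s \<mu> > 0"
  shows "gamma0 M s < 0"
proof -
  have "s 1 \<le> Max (s ` {1..M})" and "s 1 > 0" using assms by auto
  then show ?thesis by (simp add: gamma0_def)
qed

lemma Tfun_eq:
  assumes "\<forall>\<mu>\<in>{1..M}. s \<mu> > 0" and "\<gamma> > gamma0 M s"
  shows "Tfun M y a s \<gamma> = - (1 / (2 * real M)) * (\<Sum>\<mu>\<in>{1..M}. (y \<mu> - a \<mu>)\<^sup>2 * frac_deriv 0 (s \<mu>) \<gamma>)"
  unfolding Tfun_def sum_distrib_left
  by (rule sum.cong) (use assms one_plus_gamma_s_pos in \<open>auto simp: obj_theta_star frac_deriv_def\<close>)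

lemma higher_deriv_Tfun:
  assumes spos: "\<forall>\<mu>\<in>{1..M}. s \<mu> > 0" and \<gamma>: "\<gamma> > gamma0 M s"
  shows "((deriv ^^ k) (Tfun M y a s) has_real_derivative
           fact (Suc k) / (2 * real M) * (-1) ^ Suc k *
           (\<Sum>\<mu>\<in>{1..M}. (gfun (y \<mu>) (a \<mu>) (s \<mu>) \<gamma>)\<^sup>2 * (s \<mu> / (1 + \<gamma> * s \<mu>)) ^ k)) (at \<gamma>)"
proof -
  define f where "f j x = - (1 / (2 * real M)) * (\<Sum>\<mu>\<in>{1..M}. (y \<mu> - a \<mu>)\<^sup>2 * frac_deriv j (s \<mu>) x)"
    for j x
  have f: "(f j has_real_derivative f (Suc j) x) (at x)" if "x \<in> {gamma0 M s<..}" for j x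
    unfolding f_def using that one_plus_gamma_s_pos[OF spos]
    by (intro DERIV_cmult DERIV_sum has_real_derivative_frac_deriv) (simp add: less_imp_neq[symmetric])
  have "((deriv ^^ k) (Tfun M y a s) has_real_derivative f (Suc k) \<gamma>) (at \<gamma>)"
    by (rule higher_deriv_eq_on_open[where U = "{gamma0 M s<..}" and f = f, OF _ _ f])
       (use Tfun_eq[OF spos] \<gamma> in \<open>simp_all add: f_def\<close>)
  moreover have "f (Suc k) \<gamma> = fact (Suc k) / (2 * real M) * (-1) ^ Suc k *
           (\<Sum>\<mu>\<in>{1..M}. (gfun (y \<mu>) (a \<mu>) (s \<mu>) \<gamma>)\<^sup>2 * (s \<mu> / (1 + \<gamma> * s \<mu>)) ^ k)"
    unfolding f_def sum_distrib_left
  proof (rule sum.cong)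
    fix \<mu> assume \<mu>: "\<mu> \<in> {1..M}"
    then have "s \<mu> > 0" and "1 + \<gamma> * s \<mu> > 0" using spos one_plus_gamma_s_pos[OF spos \<gamma>] by auto
    then show "- (1 / (2 * real M)) * ((y \<mu> - a \<mu>)\<^sup>2 * frac_deriv (Suc k) (s \<mu>) \<gamma>) =
        fact (Suc k) / (2 * real M) * (-1) ^ Suc k *
        ((gfun (y \<mu>) (a \<mu>) (s \<mu>) \<gamma>)\<^sup>2 * (s \<mu> / (1 + \<gamma> * s \<mu>)) ^ k)"
      by (simp add: gfun_eq frac_deriv_Suc power_divide mult_ac)
  qed simp
  ultimately show ?thesis by simp
qed

lemma has_real_derivative_Tfun:
  assumes "\<forall>\<mu>\<in>{1..M}. s \<mu> > 0" and "\<gamma> > gamma0 M s"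
  shows "(Tfun M y a s has_real_derivative
           (1 / real M) * (\<Sum>\<mu>\<in>{1..M}. lnf (y \<mu>) (theta_star (y \<mu>) (a \<mu>) (s \<mu>) \<gamma>))) (at \<gamma>)"
  using higher_deriv_Tfun[OF assms, of 0 y a]
  by (simp add: lnf_theta_star sum_negf sum_divide_distrib[symmetric] mult.commute)

lemma Taylor_term_Tfun:
  assumes "M \<ge> 1" and spos: "\<forall>\<mu>\<in>{1..M}. s \<mu> > 0"
  shows "(deriv ^^ Suc k) (Tfun M y a s) 1 / fact (Suc k) * \<eta> ^ Suc k =
           - (\<eta> / (2 * real M)) *
           (\<Sum>\<mu>\<in>{1..M}. (gfun (y \<mu>) (a \<mu>) (s \<mu>) 1)\<^sup>2 * (- \<eta> * (s \<mu> / (1 + s \<mu>))) ^ k)"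
proof -
  have "1 > gamma0 M s" using gamma0_neg[OF assms] by simp
  then have "(deriv ^^ Suc k) (Tfun M y a s) 1 = fact (Suc k) / (2 * real M) * (-1) ^ Suc k *
      (\<Sum>\<mu>\<in>{1..M}. (gfun (y \<mu>) (a \<mu>) (s \<mu>) 1)\<^sup>2 * (s \<mu> / (1 + s \<mu>)) ^ k)"
    using DERIV_imp_deriv[OF higher_deriv_Tfun[OF spos, of 1 k y a]] by simp
  moreover have "(\<Sum>\<mu>\<in>{1..M}. (gfun (y \<mu>) (a \<mu>) (s \<mu>) 1)\<^sup>2 * (- \<eta> * (s \<mu> / (1 + s \<mu>))) ^ k) =
      (- \<eta>) ^ k * (\<Sum>\<mu>\<in>{1..M}. (gfun (y \<mu>) (a \<mu>) (s \<mu>) 1)\<^sup>2 * (s \<mu> / (1 + s \<mu>)) ^ k)"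
    unfolding power_mult_distrib sum_distrib_left by (simp add: mult_ac)
  ultimately show ?thesis
    by (simp add: power_minus')
qed

lemma ex_gfun_one_nonzero:
  assumes "\<forall>\<mu>\<in>{1..M}. s \<mu> > 0" and "\<exists>\<mu>\<in>{1..M}. y \<mu> \<noteq> a \<mu>"
  shows "\<exists>\<mu>\<in>{1..M}. (gfun (y \<mu>) (a \<mu>) (s \<mu>) 1)\<^sup>2 \<noteq> 0"
proof -
  obtain \<mu> where "\<mu> \<in> {1..M}" "y \<mu> \<noteq> a \<mu>" using assms(2) by blast
  moreover have "s \<mu> > 0" using assms(1) \<open>\<mu> \<in> {1..M}\<close> by blast
  ultimately have "gfun (y \<mu>) (a \<mu>) (s \<mu>) 1 \<noteq> 0" by (simp add: gfun_eq)
  then show ?thesis using \<open>\<mu> \<in> {1..M}\<close> by auto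
qed

lemma Taylor_series_Tfun:
  fixes \<eta> :: real
  assumes "M \<ge> 1" and spos: "\<forall>\<mu>\<in>{1..M}. s \<mu> > 0" and "\<exists>\<mu>\<in>{1..M}. y \<mu> \<noteq> a \<mu>"
  defines "L \<equiv> dominant_rate {1..M} (\<lambda>\<mu>. (gfun (y \<mu>) (a \<mu>) (s \<mu>) 1)\<^sup>2) (\<lambda>\<mu>. s \<mu> / (1 + s \<mu>))"
  shows "\<bar>\<eta>\<bar> * L < 1 \<Longrightarrow> summable (\<lambda>k. (deriv ^^ k) (Tfun M y a s) 1 / fact k * \<eta> ^ k)"
    and "\<bar>\<eta>\<bar> * L > 1 \<Longrightarrow> \<not> summable (\<lambda>k. (deriv ^^ k) (Tfun M y a s) 1 / fact k * \<eta> ^ k)"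
proof -
  have "\<forall>\<mu>\<in>{1..M}. s \<mu> / (1 + s \<mu>) \<ge> 0" using spos by (simp add: less_imp_le)
  note terms = summable_Suc_iff[symmetric, of "\<lambda>k. (deriv ^^ k) (Tfun M y a s) 1 / fact k * \<eta> ^ k"]
               Taylor_term_Tfun[OF assms(1,2)]
  show "summable (\<lambda>k. (deriv ^^ k) (Tfun M y a s) 1 / fact k * \<eta> ^ k)" if "\<bar>\<eta>\<bar> * L < 1"
    unfolding terms using that \<open>\<forall>\<mu>\<in>{1..M}. _ \<ge> 0\<close>
    by (intro summable_mult summable_power_sum) (simp_all add: L_def)
  show "\<not> summable (\<lambda>k. (deriv ^^ k) (Tfun M y a s) 1 / fact k * \<eta> ^ k)" if "\<bar>\<eta>\<bar> * L > 1"
  proof -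
    have "\<not> summable (\<lambda>k. \<Sum>\<mu>\<in>{1..M}. (gfun (y \<mu>) (a \<mu>) (s \<mu>) 1)\<^sup>2 * (- \<eta> * (s \<mu> / (1 + s \<mu>))) ^ k)"
      using that \<open>\<forall>\<mu>\<in>{1..M}. _ \<ge> 0\<close> ex_gfun_one_nonzero[OF spos assms(3)]
      by (intro not_summable_power_sum) (simp_all add: L_def)
    moreover have "\<eta> \<noteq> 0" using that by auto
    ultimately show ?thesis unfolding terms summable_cmult_iff using \<open>M \<ge> 1\<close> by simp
  qed
qed

theorem theorem4:
  fixes M :: nat and y a s :: "nat \<Rightarrow> real"
  assumes M: "M \<ge> 1"
    and spos: "\<forall>\<mu>\<in>{1..M}. s \<mu> > 0"
  shows
    "(\<forall>\<gamma>>gamma0 M s.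
        (Tfun M y a s has_real_derivative
           (1 / real M) * (\<Sum>\<mu>\<in>{1..M}. lnf (y \<mu>) (theta_star (y \<mu>) (a \<mu>) (s \<mu>) \<gamma>))) (at \<gamma>)
      \<and> (\<forall>k::nat. k \<ge> 2 \<longrightarrow>
          ((deriv ^^ (k - 1)) (Tfun M y a s) has_real_derivative
             fact k / (2 * real M) * (-1) ^ k *
             (\<Sum>\<mu>\<in>{1..M}. (gfun (y \<mu>) (a \<mu>) (s \<mu>) \<gamma>)^2 *
                 (s \<mu> / (1 + \<gamma> * s \<mu>)) ^ (k - 1))) (at \<gamma>)))
     \<and>
     ((\<exists>\<mu>\<in>{1..M}. y \<mu> \<noteq> a \<mu>) \<longrightarrow>
       (let g = (\<lambda>\<mu>. gfun (y \<mu>) (a \<mu>) (s \<mu>) 1);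
            r = (\<lambda>\<mu>. s \<mu> / (1 + s \<mu>));
            T = Tfun M y a s
        in (\<exists>L. (\<lambda>n. (\<Sum>\<mu>\<in>{1..M}. (g \<mu>)^2 * (r \<mu>) ^ n)
                     / (\<Sum>\<mu>\<in>{1..M}. (g \<mu>)^2 * (r \<mu>) ^ (n - 1))) \<longlonglongrightarrow> L
               \<and> (\<forall>\<eta>::real. \<bar>\<eta>\<bar> * L < 1 \<longrightarrow>
                     summable (\<lambda>k. (deriv ^^ k) T 1 / fact k * \<eta> ^ k))
               \<and> (\<forall>\<eta>::real. \<bar>\<eta>\<bar> * L > 1 \<longrightarrow>
                     \<not> summable (\<lambda>k. (deriv ^^ k) T 1 / fact k * \<eta> ^ k)))
          \<and> (\<forall>s0::real. (\<forall>\<mu>\<in>{1..M}. s \<mu> = s0) \<longrightarrow>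
               (\<forall>\<eta>::real. \<bar>\<eta>\<bar> * (s0 / (1 + s0)) < 1 \<longrightarrow>
                     summable (\<lambda>k. (deriv ^^ k) T 1 / fact k * \<eta> ^ k))
             \<and> (\<forall>\<eta>::real. \<bar>\<eta>\<bar> * (s0 / (1 + s0)) > 1 \<longrightarrow>
                     \<not> summable (\<lambda>k. (deriv ^^ k) T 1 / fact k * \<eta> ^ k)))))"
  unfolding Let_def
proof (intro conjI allI impI, goal_cases)
  case (1 \<gamma>)
  then show ?case using has_real_derivative_Tfun[OF spos] by blast
next
  case (2 \<gamma> k)
  then show ?case using higher_deriv_Tfun[OF spos, of \<gamma> "k - 1" y a] by simp
next
  case 3
  have "\<forall>\<mu>\<in>{1..M}. s \<mu> / (1 + s \<mu>) > 0" using spos by (simp add: add_pos_pos)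
  then have "(\<lambda>n. (\<Sum>\<mu>\<in>{1..M}. (gfun (y \<mu>) (a \<mu>) (s \<mu>) 1)\<^sup>2 * (s \<mu> / (1 + s \<mu>)) ^ n) /
                 (\<Sum>\<mu>\<in>{1..M}. (gfun (y \<mu>) (a \<mu>) (s \<mu>) 1)\<^sup>2 * (s \<mu> / (1 + s \<mu>)) ^ (n - 1)))
      \<longlonglongrightarrow> dominant_rate {1..M} (\<lambda>\<mu>. (gfun (y \<mu>) (a \<mu>) (s \<mu>) 1)\<^sup>2) (\<lambda>\<mu>. s \<mu> / (1 + s \<mu>))"
    using ex_gfun_one_nonzero[OF spos 3] by (intro power_sum_ratio_tendsto) auto
  then show ?case using Taylor_series_Tfun[OF M spos 3] by blast
next
  case (4 s0 \<eta>)
  then have "dominant_rate {1..M} (\<lambda>\<mu>. (gfun (y \<mu>) (a \<mu>) (s \<mu>) 1)\<^sup>2) (\<lambda>\<mu>. s \<mu> / (1 + s \<mu>)) = s0 / (1 + s0)"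
    using ex_gfun_one_nonzero[OF spos] by (intro dominant_rate_const) auto
  with 4 show ?case using Taylor_series_Tfun(1)[OF M spos] by simp
next
  case (5 s0 \<eta>)
  then have "dominant_rate {1..M} (\<lambda>\<mu>. (gfun (y \<mu>) (a \<mu>) (s \<mu>) 1)\<^sup>2) (\<lambda>\<mu>. s \<mu> / (1 + s \<mu>)) = s0 / (1 + s0)"
    using ex_gfun_one_nonzero[OF spos] by (intro dominant_rate_const) auto
  with 5 show ?case using Taylor_series_Tfun(2)[OF M spos] by simp
qed

end
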